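(* Let $p$ be a prime. Let $G=P\times A$, where $P$ is a finite non-abelian $p$-group and $A$ is a non-trivial finite abelian group of order coprime to $p$. Let $H=P_1\times X$ be a finite nilpotent group, where $P_1$ is a non-abelian $p$-group and $X$ is a group with $\gcd(p,|X|)=1$. Suppose that $\Gamma_G$ and $\Gamma_H$ are irregular and $\Gamma_G\cong\Gamma_H$. Then $|G|=|H|$.
   Context: For a non-abelian group $G$ with center $Z(G)$, the non-commuting graph $\Gamma_G$ is the simple graph with vertex set $G\setminus Z(G)$ in which two distinct vertices $x,y$ are adjacent if and only if $xy\neq yx$. A graph is regular if all its vertices have the same degree, and irregular otherwise. *)

theory Defs
  imports "HOL-Algebra.Algebra"
begin

definition grp_center :: "('a, 'b) monoid_scheme \<Rightarrow> 'a set" where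
  "grp_center G = {z \<in> carrier G. \<forall>g \<in> carrier G. z \<otimes>\<^bsub>G\<^esub> g = g \<otimes>\<^bsub>G\<^esub> z}"

definition nc_vertices :: "('a, 'b) monoid_scheme \<Rightarrow> 'a set" where
  "nc_vertices G = carrier G - grp_center G"

definition nc_adj :: "('a, 'b) monoid_scheme \<Rightarrow> 'a \<Rightarrow> 'a \<Rightarrow> bool" where
  "nc_adj G x y \<longleftrightarrow> x \<in> nc_vertices G \<and> y \<in> nc_vertices G \<and> x \<noteq> y
      \<and> x \<otimes>\<^bsub>G\<^esub> y \<noteq> y \<otimes>\<^bsub>G\<^esub> x"

definition nc_degree :: "('a, 'b) monoid_scheme \<Rightarrow> 'a \<Rightarrow> nat" where
  "nc_degree G x = card {y \<in> nc_vertices G. nc_adj G x y}"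

definition nc_irregular :: "('a, 'b) monoid_scheme \<Rightarrow> bool" where
  "nc_irregular G \<longleftrightarrow> (\<exists>x \<in> nc_vertices G. \<exists>y \<in> nc_vertices G. nc_degree G x \<noteq> nc_degree G y)"

definition nc_graph_iso :: "('a, 'b) monoid_scheme \<Rightarrow> ('c, 'd) monoid_scheme \<Rightarrow> bool" where
  "nc_graph_iso G H \<longleftrightarrow> (\<exists>f. bij_betw f (nc_vertices G) (nc_vertices H) \<and>
      (\<forall>x \<in> nc_vertices G. \<forall>y \<in> nc_vertices G. nc_adj H (f x) (f y) \<longleftrightarrow> nc_adj G x y))"

definition p_group :: "nat \<Rightarrow> ('a, 'b) monoid_scheme \<Rightarrow> bool" where
  "p_group p G \<longleftrightarrow> group G \<and> finite (carrier G) \<and> (\<exists>k. order G = p ^ k)"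

definition comm_set :: "('a, 'b) monoid_scheme \<Rightarrow> 'a set \<Rightarrow> 'a set \<Rightarrow> 'a set" where
  "comm_set G H K = {h \<otimes>\<^bsub>G\<^esub> k \<otimes>\<^bsub>G\<^esub> inv\<^bsub>G\<^esub> h \<otimes>\<^bsub>G\<^esub> inv\<^bsub>G\<^esub> k | h k. h \<in> H \<and> k \<in> K}"

fun lower_central :: "('a, 'b) monoid_scheme \<Rightarrow> nat \<Rightarrow> 'a set" where
  "lower_central G 0 = carrier G"
| "lower_central G (Suc n) = generate G (comm_set G (lower_central G n) (carrier G))"

definition nilpotent_group :: "('a, 'b) monoid_scheme \<Rightarrow> bool" where
  "nilpotent_group G \<longleftrightarrow> group G \<and> (\<exists>n. lower_central G n = {\<one>\<^bsub>G\<^esub>})"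

end

theory Submission
  imports Defs
begin

(* An isomorphism of the
   non-commuting graphs preserves the number of vertices |X| - |Z(X)| and the degrees
   |X| - |C_X(x)|, hence also the "codegree" |C_X(x)| - |Z(X)| of each vertex.  For a
   direct product the centre and centralizers are products, and in a p-group P the
   centre and every proper centralizer are p-powers p^z < p^(z+k) < p^(z+N) = |P|.
   With a = |A|, q = |Q|, m = |Z(Q)| this gives
     p^z a (p^N - 1) = p^z' (p^N' q - m)               (vertex count)
     p^z a (p^k - 1) = p^z' (p^j c - m)                (codegree of a vertex (y1, y2))
   where c = |C_Q(y2)| ranges over the centralizer orders of Q.  Comparing p-adic
   valuations forces z = z', then k = j; a vertex with c < q would give a contradiction,
   so Q is abelian (m = q), and then a = q and N = N'.

   The argument does not need the irregularity or nilpotency hypotheses. *)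

definition centralizer :: "('a, 'b) monoid_scheme \<Rightarrow> 'a \<Rightarrow> 'a set" where
  "centralizer G x = {y \<in> carrier G. x \<otimes>\<^bsub>G\<^esub> y = y \<otimes>\<^bsub>G\<^esub> x}"

lemma (in group) commuting_inv:
  assumes "x \<in> carrier G" "a \<in> carrier G" "x \<otimes> a = a \<otimes> x"
  shows "x \<otimes> inv a = inv a \<otimes> x"
proof -
  have "x \<otimes> inv a = inv a \<otimes> (a \<otimes> x) \<otimes> inv a" using assms(1,2) by (simp add: m_assoc[symmetric])
  also have "\<dots> = inv a \<otimes> (x \<otimes> a) \<otimes> inv a" using assms(3) by simp
  also have "\<dots> = inv a \<otimes> x" using assms(1,2) by (simp add: m_assoc)
  finally show ?thesis .
qed

lemma (in group) commuting_mult: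
  assumes "x \<in> carrier G" "a \<in> carrier G" "b \<in> carrier G"
    and "x \<otimes> a = a \<otimes> x" "x \<otimes> b = b \<otimes> x"
  shows "x \<otimes> (a \<otimes> b) = (a \<otimes> b) \<otimes> x"
proof -
  have "x \<otimes> (a \<otimes> b) = (x \<otimes> a) \<otimes> b" using assms(1-3) by (simp add: m_assoc)
  also have "\<dots> = a \<otimes> (x \<otimes> b)" using assms(1-4) by (simp add: m_assoc)
  also have "\<dots> = (a \<otimes> b) \<otimes> x" using assms(1-3,5) by (simp add: m_assoc)
  finally show ?thesis .
qed

lemma (in group) centralizer_subgroup:
  assumes "x \<in> carrier G" shows "subgroup (centralizer G x) G"
proof (rule subgroupI)
  show "centralizer G x \<noteq> {}" using assms by (auto simp: centralizer_def)
  fix a b assume a: "a \<in> centralizer G x" and b: "b \<in> centralizer G x"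
  then show "inv a \<in> centralizer G x" "a \<otimes> b \<in> centralizer G x"
    using assms commuting_inv[of x a] commuting_mult[of x a b] by (simp_all add: centralizer_def)
qed (auto simp: centralizer_def)

lemma (in group) center_eq_Inter_centralizers:
  "grp_center G = (\<Inter>g\<in>carrier G. centralizer G g)"
proof (rule equalityI; rule subsetI)
  fix z assume "z \<in> grp_center G"
  then have "z \<in> carrier G" "\<And>g. g \<in> carrier G \<Longrightarrow> g \<otimes> z = z \<otimes> g"
    by (auto simp: grp_center_def)
  then show "z \<in> (\<Inter>g\<in>carrier G. centralizer G g)" by (simp add: centralizer_def)
next
  fix z assume z: "z \<in> (\<Inter>g\<in>carrier G. centralizer G g)"
  then have "z \<in> carrier G" using one_closed by (auto simp: centralizer_def)
  moreover have "z \<otimes> g = g \<otimes> z" if "g \<in> carrier G" for g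
    using z that by (auto simp: centralizer_def)
  ultimately show "z \<in> grp_center G" by (simp add: grp_center_def)
qed

lemma (in group) center_subgroup: "subgroup (grp_center G) G"
  unfolding center_eq_Inter_centralizers
  by (rule subgroups_Inter) (auto intro: centralizer_subgroup)

lemma noncentral_centralizer_bounds:
  assumes "x \<in> carrier G" "x \<notin> grp_center G"
  shows "grp_center G \<subset> centralizer G x" "centralizer G x \<subset> carrier G"
proof -
  show "grp_center G \<subset> centralizer G x"
    using assms by (force simp: grp_center_def centralizer_def)
  obtain g where "g \<in> carrier G" "x \<otimes>\<^bsub>G\<^esub> g \<noteq> g \<otimes>\<^bsub>G\<^esub> x"
    using assms by (auto simp: grp_center_def)
  then show "centralizer G x \<subset> carrier G" by (auto simp: centralizer_def)
qed

lemma comm_group_iff_center: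
  assumes "group G" shows "comm_group G \<longleftrightarrow> grp_center G = carrier G"
proof
  assume "comm_group G"
  then show "grp_center G = carrier G" by (auto simp: grp_center_def comm_group_def comm_monoid.m_comm)
next
  assume "grp_center G = carrier G"
  then have "\<And>x y. x \<in> carrier G \<Longrightarrow> y \<in> carrier G \<Longrightarrow> x \<otimes>\<^bsub>G\<^esub> y = y \<otimes>\<^bsub>G\<^esub> x"
    by (auto simp: grp_center_def)
  then show "comm_group G" using group.group_comm_groupI[OF assms] by blast
qed

lemma nc_neighbours:
  assumes "x \<in> nc_vertices G"
  shows "{y \<in> nc_vertices G. nc_adj G x y} = carrier G - centralizer G x"
proof (rule equalityI; rule subsetI)
  fix y assume "y \<in> {y \<in> nc_vertices G. nc_adj G x y}"
  then show "y \<in> carrier G - centralizer G x"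
    by (auto simp: nc_adj_def nc_vertices_def centralizer_def)
next
  fix y assume y: "y \<in> carrier G - centralizer G x"
  then have noncomm: "x \<otimes>\<^bsub>G\<^esub> y \<noteq> y \<otimes>\<^bsub>G\<^esub> x" by (simp add: centralizer_def)
  have "x \<in> carrier G" using assms by (simp add: nc_vertices_def)
  have "y \<notin> grp_center G"
  proof
    assume "y \<in> grp_center G"
    then have "y \<otimes>\<^bsub>G\<^esub> x = x \<otimes>\<^bsub>G\<^esub> y" using \<open>x \<in> carrier G\<close> by (simp add: grp_center_def)
    with noncomm show False by simp
  qed
  then show "y \<in> {y \<in> nc_vertices G. nc_adj G x y}"
    using y noncomm assms by (auto simp: nc_vertices_def nc_adj_def)
qed

lemma nc_codegree:
  assumes "finite (carrier G)" "x \<in> nc_vertices G"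
  shows "card (nc_vertices G) - nc_degree G x = card (centralizer G x - grp_center G)"
proof -
  have "centralizer G x - grp_center G = nc_vertices G - {y \<in> nc_vertices G. nc_adj G x y}"
    unfolding nc_neighbours[OF assms(2)] by (auto simp: nc_vertices_def centralizer_def)
  moreover have "finite (nc_vertices G)" using assms(1) by (simp add: nc_vertices_def)
  ultimately show ?thesis unfolding nc_degree_def by (simp add: card_Diff_subset)
qed

lemma nc_graph_iso_degree:
  assumes bij: "bij_betw f (nc_vertices G) (nc_vertices H)"
    and adj: "\<forall>x \<in> nc_vertices G. \<forall>y \<in> nc_vertices G. nc_adj H (f x) (f y) \<longleftrightarrow> nc_adj G x y"
    and x: "x \<in> nc_vertices G"
  shows "nc_degree H (f x) = nc_degree G x"
proof -
  have "{y \<in> nc_vertices H. nc_adj H (f x) y} = f ` {y \<in> nc_vertices G. nc_adj G x y}"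
  proof (rule equalityI; rule subsetI)
    fix y assume "y \<in> {y \<in> nc_vertices H. nc_adj H (f x) y}"
    moreover obtain z where "z \<in> nc_vertices G" "y = f z"
      using bij calculation unfolding bij_betw_def by blast
    ultimately show "y \<in> f ` {y \<in> nc_vertices G. nc_adj G x y}" using adj x by auto
  next
    fix y assume "y \<in> f ` {y \<in> nc_vertices G. nc_adj G x y}"
    then obtain z where z: "z \<in> nc_vertices G" "nc_adj G x z" "y = f z" by blast
    then have "f z \<in> nc_vertices H" using bij unfolding bij_betw_def by blast
    then show "y \<in> {y \<in> nc_vertices H. nc_adj H (f x) y}" using adj x z by simp
  qed
  moreover have "inj_on f {y \<in> nc_vertices G. nc_adj G x y}"
    using bij by (auto simp: bij_betw_def intro: inj_on_subset)
  ultimately show ?thesis unfolding nc_degree_def by (simp add: card_image)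
qed

lemma nc_graph_iso_card_vertices:
  assumes "nc_graph_iso G H" shows "card (nc_vertices G) = card (nc_vertices H)"
proof -
  obtain f where "bij_betw f (nc_vertices G) (nc_vertices H)"
    using assms unfolding nc_graph_iso_def by blast
  then show ?thesis by (rule bij_betw_same_card)
qed

lemma nc_graph_iso_codegree:
  assumes iso: "nc_graph_iso G H" and fin: "finite (carrier G)" "finite (carrier H)"
    and y: "y \<in> nc_vertices H"
  shows "\<exists>x \<in> nc_vertices G.
           card (centralizer G x - grp_center G) = card (centralizer H y - grp_center H)"
proof -
  obtain f where bij: "bij_betw f (nc_vertices G) (nc_vertices H)"
    and adj: "\<forall>x \<in> nc_vertices G. \<forall>y \<in> nc_vertices G. nc_adj H (f x) (f y) \<longleftrightarrow> nc_adj G x y"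
    using iso unfolding nc_graph_iso_def by blast
  obtain x where x: "x \<in> nc_vertices G" "f x = y"
    using bij y unfolding bij_betw_def by (metis imageE)
  have "card (centralizer G x - grp_center G) = card (nc_vertices G) - nc_degree G x"
    using nc_codegree[OF fin(1) x(1)] by (rule sym)
  also have "\<dots> = card (nc_vertices H) - nc_degree H y"
    using nc_graph_iso_card_vertices[OF iso] nc_graph_iso_degree[OF bij adj x(1)] x(2) by simp
  also have "\<dots> = card (centralizer H y - grp_center H)"
    using nc_codegree[OF fin(2) y] .
  finally show ?thesis using x(1) by (intro bexI[of _ x])
qed

lemma card_noncentral_centralizer:
  assumes "finite (carrier G)" "x \<in> carrier G"
  shows "int (card (centralizer G x - grp_center G)) = int (card (centralizer G x)) - int (card (grp_center G))"
proof -
  have sub: "grp_center G \<subseteq> centralizer G x"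
    using assms(2) by (auto simp: grp_center_def centralizer_def)
  moreover have "finite (centralizer G x)"
    using assms(1) by (auto simp: centralizer_def)
  ultimately show ?thesis by (simp add: card_Diff_subset card_mono of_nat_diff finite_subset)
qed

lemma card_nc_vertices:
  assumes "finite (carrier G)"
  shows "int (card (nc_vertices G)) = int (order G) - int (card (grp_center G))"
proof -
  have "grp_center G \<subseteq> carrier G" by (auto simp: grp_center_def)
  then show ?thesis
    using assms unfolding nc_vertices_def order_def
    by (simp add: card_Diff_subset card_mono of_nat_diff finite_subset)
qed

lemma centralizer_DirProd:
  "centralizer (G \<times>\<times> H) (x, y) = centralizer G x \<times> centralizer H y"
  by (auto simp: centralizer_def)

lemma center_DirProd:
  assumes "group G" "group H"
  shows "grp_center (G \<times>\<times> H) = grp_center G \<times> grp_center H"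
proof (rule equalityI; rule subsetI)
  fix z assume z: "z \<in> grp_center (G \<times>\<times> H)"
  obtain a b where ab: "z = (a, b)" by fastforce
  have "a \<otimes>\<^bsub>G\<^esub> g = g \<otimes>\<^bsub>G\<^esub> a \<and> b \<otimes>\<^bsub>H\<^esub> h = h \<otimes>\<^bsub>H\<^esub> b"
    if "g \<in> carrier G" "h \<in> carrier H" for g h
    using z ab that by (auto simp: grp_center_def)
  moreover have "\<one>\<^bsub>G\<^esub> \<in> carrier G" "\<one>\<^bsub>H\<^esub> \<in> carrier H"
    using assms by (simp_all add: group.is_monoid monoid.one_closed)
  ultimately show "z \<in> grp_center G \<times> grp_center H"
    using z ab by (auto simp: grp_center_def)
qed (auto simp: grp_center_def)

lemma nc_vertices_DirProd:
  assumes "group G" "group H"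
  shows "(a, b) \<in> nc_vertices (G \<times>\<times> H) \<longleftrightarrow>
           a \<in> carrier G \<and> b \<in> carrier H \<and> \<not> (a \<in> grp_center G \<and> b \<in> grp_center H)"
  using center_DirProd[OF assms] by (auto simp: nc_vertices_def)

lemma DirProd_card_codegree:
  assumes "group G" "group H" "finite (carrier G)" "finite (carrier H)"
    and "x \<in> carrier G" "y \<in> carrier H"
  shows "int (card (centralizer (G \<times>\<times> H) (x, y) - grp_center (G \<times>\<times> H)))
           = int (card (centralizer G x)) * int (card (centralizer H y))
             - int (card (grp_center G)) * int (card (grp_center H))"
  using card_noncentral_centralizer[of "G \<times>\<times> H" "(x, y)"] assms
  by (simp add: centralizer_DirProd center_DirProd card_cartesian_product)

lemma DirProd_card_nc_vertices:
  assumes "group G" "group H" "finite (carrier G)" "finite (carrier H)"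
  shows "int (card (nc_vertices (G \<times>\<times> H)))
           = int (order G) * int (order H) - int (card (grp_center G)) * int (card (grp_center H))"
  using card_nc_vertices[of "G \<times>\<times> H"] assms
  by (simp add: center_DirProd order_def card_cartesian_product)

lemma p_group_subgroup_card:
  assumes "Factorial_Ring.prime (p::nat)" "p_group p G" "subgroup H G"
  obtains i where "card H = p ^ i"
proof -
  obtain n where n: "order G = p ^ n" and grp: "group G" and fin: "finite (carrier G)"
    using assms(2) by (auto simp: p_group_def)
  have "card H dvd p ^ n"
    using group.lagrange[OF grp assms(3)] n by (metis dvd_triv_right)
  then show ?thesis using that divides_primepow_nat[OF assms(1)] by blast
qed

lemma p_group_center_card:
  assumes "Factorial_Ring.prime (p::nat)" "p_group p G"
  obtains z N where "card (grp_center G) = p ^ z" "order G = p ^ (z + N)"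
proof -
  have grp: "group G" and fin: "finite (carrier G)" using assms(2) by (auto simp: p_group_def)
  obtain n where n: "order G = p ^ n" using assms(2) by (auto simp: p_group_def)
  obtain z where z: "card (grp_center G) = p ^ z"
    using p_group_subgroup_card[OF assms group.center_subgroup[OF grp]] by blast
  have "grp_center G \<subseteq> carrier G" by (auto simp: grp_center_def)
  then have "card (grp_center G) \<le> card (carrier G)" by (rule card_mono[OF fin])
  then have "p ^ z \<le> p ^ n" using z n by (simp add: order_def)
  then have "z \<le> n" using prime_gt_1_nat[OF assms(1)] by simp
  then have "order G = p ^ (z + (n - z))" using n by simp
  then show ?thesis using that z by blast
qed

lemma p_group_centralizer_card:
  assumes "Factorial_Ring.prime (p::nat)" "p_group p G"
    and Z: "card (grp_center G) = p ^ z" and ord: "order G = p ^ (z + N)"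
    and x: "x \<in> carrier G" "x \<notin> grp_center G"
  obtains j where "1 \<le> j" "j < N" "card (centralizer G x) = p ^ (z + j)"
proof -
  have grp: "group G" and fin: "finite (carrier G)" using assms(2) by (auto simp: p_group_def)
  obtain a where a: "card (centralizer G x) = p ^ a"
    using p_group_subgroup_card[OF assms(1,2) group.centralizer_subgroup[OF grp x(1)]] by blast
  have p1: "1 < p" using prime_gt_1_nat[OF assms(1)] .
  have "card (grp_center G) < card (centralizer G x)"
    using psubset_card_mono[OF _ noncentral_centralizer_bounds(1)[OF x]] fin
    by (auto simp: centralizer_def)
  then have "z < a" using Z a p1 by simp
  have "card (centralizer G x) < order G"
    using psubset_card_mono[OF fin noncentral_centralizer_bounds(2)[OF x]] by (simp add: order_def)
  then have "a < z + N" using ord a p1 by simp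
  show ?thesis
    using that[of "a - z"] a \<open>z < a\<close> \<open>a < z + N\<close> by simp
qed

lemma abelian_factor_codegree:
  assumes p: "Factorial_Ring.prime p" "p_group p P" and A: "comm_group A" "finite (carrier A)"
    and Z: "card (grp_center P) = p ^ z" and ord: "order P = p ^ (z + N)"
    and x: "x \<in> nc_vertices (P \<times>\<times> A)"
  shows "\<exists>k. 1 \<le> k \<and> k < N \<and> int (card (centralizer (P \<times>\<times> A) x - grp_center (P \<times>\<times> A)))
           = int p ^ (z + k) * int (order A) - int p ^ z * int (order A)"
proof -
  have P: "group P" "finite (carrier P)" using p(2) by (auto simp: p_group_def)
  have gA: "group A" using A(1) by (simp add: comm_group_def)
  have ZA: "grp_center A = carrier A" using comm_group_iff_center[OF gA] A(1) by simp
  obtain x1 x2 where x12: "x = (x1, x2)" by fastforce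
  then have x1: "x1 \<in> carrier P" "x1 \<notin> grp_center P" and x2: "x2 \<in> carrier A"
    using x nc_vertices_DirProd[OF P(1) gA] ZA by auto
  obtain k where k: "1 \<le> k" "k < N" "card (centralizer P x1) = p ^ (z + k)"
    using p_group_centralizer_card[OF p Z ord x1] .
  have "centralizer A x2 = carrier A"
    using x2 ZA by (auto simp: centralizer_def grp_center_def)
  then show ?thesis
    using DirProd_card_codegree[OF P(1) gA P(2) A(2) x1(1) x2] Z k x12
    by (auto simp: ZA order_def)
qed

lemma centralizer_orders:
  assumes "group Q" "finite (carrier Q)"
  shows "order Q \<in> (\<lambda>y. card (centralizer Q y)) ` carrier Q"
    and "card (grp_center Q) \<noteq> order Q \<Longrightarrow> \<exists>y \<in> carrier Q. card (centralizer Q y) < order Q"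
proof -
  have "\<one>\<^bsub>Q\<^esub> \<in> carrier Q" "centralizer Q \<one>\<^bsub>Q\<^esub> = carrier Q"
    using assms(1) by (auto simp: centralizer_def group.is_monoid monoid.one_closed)
  then show "order Q \<in> (\<lambda>y. card (centralizer Q y)) ` carrier Q"
    unfolding order_def by (metis image_eqI)
next
  assume "card (grp_center Q) \<noteq> order Q"
  then have "grp_center Q \<noteq> carrier Q" by (auto simp: order_def)
  then obtain y where "y \<in> carrier Q" "y \<notin> grp_center Q" by (auto simp: grp_center_def)
  then show "\<exists>y \<in> carrier Q. card (centralizer Q y) < order Q"
    using psubset_card_mono[OF assms(2) noncentral_centralizer_bounds(2)] unfolding order_def by blast
qed

(* Lagrange for the centre: |Z(G)| divides |G|, so |Z(Q)| is prime to p as well. *)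
lemma center_card_dvd_order:
  assumes "group G" "finite (carrier G)"
  shows "card (grp_center G) dvd order G"
  using group.lagrange[OF assms(1) group.center_subgroup[OF assms(1)]] by (metis dvd_triv_right)

lemma codegree_correspondence:
  assumes iso: "nc_graph_iso (P \<times>\<times> A) (P1 \<times>\<times> Q)"
    and p: "Factorial_Ring.prime p" "p_group p P" and A: "comm_group A" "finite (carrier A)"
    and P1: "group P1" "finite (carrier P1)" and Q: "group Q" "finite (carrier Q)"
    and ZP: "card (grp_center P) = p ^ z" "order P = p ^ (z + N)"
    and ZP1: "card (grp_center P1) = p ^ z'"
    and y1: "y1 \<in> carrier P1" "y1 \<notin> grp_center P1" "card (centralizer P1 y1) = p ^ (z' + j)"
    and y2: "y2 \<in> carrier Q"
  shows "\<exists>k. 1 \<le> k \<and> k < N \<and> int p ^ (z + k) * int (order A) - int p ^ z * int (order A)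
           = int p ^ (z' + j) * int (card (centralizer Q y2)) - int p ^ z' * int (card (grp_center Q))"
proof -
  have "finite (carrier (P \<times>\<times> A))" "finite (carrier (P1 \<times>\<times> Q))"
    using p(2) A(2) P1(2) Q(2) by (simp_all add: p_group_def)
  moreover have "(y1, y2) \<in> nc_vertices (P1 \<times>\<times> Q)"
    using y1 y2 nc_vertices_DirProd[OF P1(1) Q(1)] by simp
  ultimately obtain x where x: "x \<in> nc_vertices (P \<times>\<times> A)"
    and same: "card (centralizer (P \<times>\<times> A) x - grp_center (P \<times>\<times> A))
      = card (centralizer (P1 \<times>\<times> Q) (y1, y2) - grp_center (P1 \<times>\<times> Q))"
    using nc_graph_iso_codegree[OF iso] by blast
  obtain k where "1 \<le> k" "k < N" "int (card (centralizer (P \<times>\<times> A) x - grp_center (P \<times>\<times> A)))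
      = int p ^ (z + k) * int (order A) - int p ^ z * int (order A)"
    using abelian_factor_codegree[OF p A ZP x] by blast
  then show ?thesis
    using same DirProd_card_codegree[OF P1(1) Q(1) P1(2) Q(2) y1(1) y2] ZP1 y1(3) by auto
qed

lemma prime_power_cofactor_unique:
  fixes p u w :: int
  assumes "Factorial_Ring.prime p" "p ^ a * u = p ^ b * w" "\<not> p dvd u" "\<not> p dvd w"
  shows "a = b"
proof -
  have pe: "prime_elem p" using assms(1) by (rule prime_imp_prime_elem)
  have "u \<noteq> 0" "w \<noteq> 0" "p \<noteq> 0" using assms by auto
  have "multiplicity p (p ^ n * v) = n" if "v \<noteq> 0" "\<not> p dvd v" for n and v :: int
    using that \<open>p \<noteq> 0\<close>
    by (simp add: prime_elem_multiplicity_mult_distrib[OF pe] multiplicity_prime_power[OF pe]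
        not_dvd_imp_multiplicity_0)
  then have "multiplicity p (p ^ a * u) = a" "multiplicity p (p ^ b * w) = b"
    using \<open>u \<noteq> 0\<close> \<open>w \<noteq> 0\<close> assms(3,4) by blast+
  then show ?thesis using assms(2) by simp
qed

lemma prime_not_dvd_power_minus:
  fixes p q m :: int
  assumes "Factorial_Ring.prime p" "1 \<le> k" "\<not> p dvd m"
  shows "\<not> p dvd p ^ k * q - m"
proof
  assume "p dvd p ^ k * q - m"
  moreover have "p dvd p ^ k * q" using assms(2) by (simp add: dvd_power)
  ultimately have "p dvd p ^ k * q - (p ^ k * q - m)" by (rule dvd_diff[rotated])
  then show False using assms(3) by simp
qed

lemma prime_not_dvd_power_minus_one:
  fixes p :: int
  assumes "Factorial_Ring.prime p" "1 \<le> k"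
  shows "\<not> p dvd p ^ k - 1"
  using prime_not_dvd_power_minus[OF assms prime_elem_not_unit[OF prime_imp_prime_elem[OF assms(1)]], of 1]
  by simp

lemma prime_not_dvd_coprime:
  assumes "Factorial_Ring.prime (p::nat)" "coprime p n"
  shows "\<not> int p dvd int n"
  using assms by (metis int_dvd_int_iff coprime_absorb_left not_prime_unit)

lemma cancel_common_prime_power:
  fixes p a c m :: int
  assumes p: "Factorial_Ring.prime p" and coprime: "\<not> p dvd a" "\<not> p dvd m"
    and kj: "1 \<le> k" "1 \<le> j"
    and eq: "p ^ (z + k) * a - p ^ z * a = p ^ (z' + j) * c - p ^ z' * m"
  shows "z = z'" and "a * (p ^ k - 1) = p ^ j * c - m"
proof -
  have factored: "p ^ z * (a * (p ^ k - 1)) = p ^ z' * (p ^ j * c - m)"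
    using eq by (simp add: power_add algebra_simps)
  have "\<not> p dvd a * (p ^ k - 1)"
    using prime_not_dvd_power_minus_one[OF p kj(1)] coprime(1) p
    by (simp add: prime_dvd_mult_iff)
  moreover have "\<not> p dvd p ^ j * c - m"
    using prime_not_dvd_power_minus[OF p kj(2) coprime(2)] .
  ultimately show "z = z'"
    using prime_power_cofactor_unique[OF p factored] by blast
  then show "a * (p ^ k - 1) = p ^ j * c - m"
    using factored p by (simp add: prime_def)
qed

(* Subtracting the codegree equation of the vertex (y1, 1) from the vertex-count
   equation and comparing valuations shows k = j. *)
lemma equal_exponents:
  fixes p a q m :: int
  assumes p: "Factorial_Ring.prime p" and coprime: "\<not> p dvd a" "\<not> p dvd q"
    and F0: "a * (p ^ N - 1) = p ^ N' * q - m" and F1: "a * (p ^ k - 1) = p ^ j * q - m"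
    and "1 \<le> k" "k < N" "1 \<le> j" "j < N'"
  shows "k = j"
proof -
  have "p ^ k * (a * (p ^ (N - k) - 1)) = p ^ j * (q * (p ^ (N' - j) - 1))"
  proof -
    have "p ^ N = p ^ k * p ^ (N - k)" "p ^ N' = p ^ j * p ^ (N' - j)"
      using assms(7,9) by (simp_all flip: power_add)
    then show ?thesis using F0 F1 by (simp add: algebra_simps)
  qed
  moreover have "\<not> p dvd a * (p ^ (N - k) - 1)" "\<not> p dvd q * (p ^ (N' - j) - 1)"
    using prime_not_dvd_power_minus_one[OF p] coprime p assms(7,9)
    by (simp_all add: prime_dvd_mult_iff)
  ultimately show ?thesis using prime_power_cofactor_unique[OF p] by blast
qed

(* A vertex (y1, y2) with |C_Q(y2)| < |Q| cannot have the codegree of a vertex of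
   P x A: its difference with the vertex (y1, 1) is divisible by p on one side only. *)
lemma codegree_gap:
  fixes p a q m c :: int
  assumes p: "Factorial_Ring.prime p" and coprime: "\<not> p dvd a" and pos: "0 < a"
    and F1: "a * (p ^ j - 1) = p ^ j * q - m" and F2: "a * (p ^ k - 1) = p ^ j * c - m"
    and "c < q" "1 \<le> k"
  shows False
proof -
  have p1: "1 < p" using prime_gt_1_int[OF p] .
  have D: "a * (p ^ j - p ^ k) = p ^ j * (q - c)" using F1 F2 by (simp add: algebra_simps)
  moreover have "0 < p ^ j * (q - c)" using p1 \<open>c < q\<close> by simp
  ultimately have "0 < a * (p ^ j - p ^ k)" by simp
  then have "0 < p ^ j - p ^ k" using pos zero_less_mult_pos by blast
  then have "k < j" using p1 by simp
  then have "p ^ j = p ^ k * p ^ (j - k)" by (simp flip: power_add)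
  then have "p ^ k * (a * (p ^ (j - k) - 1)) = p ^ k * (p ^ (j - k) * (q - c))"
    using D by (simp add: algebra_simps)
  then have "a * (p ^ (j - k) - 1) = p ^ (j - k) * (q - c)" using p1 by simp
  moreover have "p dvd p ^ (j - k) * (q - c)" using \<open>k < j\<close> by simp
  moreover have "\<not> p dvd a * (p ^ (j - k) - 1)"
    using prime_not_dvd_power_minus_one[OF p] \<open>k < j\<close> coprime p by (simp add: prime_dvd_mult_iff)
  ultimately show False by simp
qed

lemma orders_from_codegree_equations:
  fixes p a q m :: int and S :: "int set"
  assumes p: "Factorial_Ring.prime p"
    and coprime: "\<not> p dvd a" "\<not> p dvd q" "\<not> p dvd m" and pos: "0 < a"
    and j: "1 \<le> j" "j < N'"
    and vertices: "p ^ (z + N) * a - p ^ z * a = p ^ (z' + N') * q - p ^ z' * m"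
    and codegrees: "\<And>c. c \<in> S \<Longrightarrow>
      \<exists>k. 1 \<le> k \<and> k < N \<and> p ^ (z + k) * a - p ^ z * a = p ^ (z' + j) * c - p ^ z' * m"
    and "q \<in> S" and noncentral: "m \<noteq> q \<Longrightarrow> \<exists>c \<in> S. c < q"
  shows "p ^ (z + N) * a = p ^ (z' + N') * q"
proof -
  obtain k where k: "1 \<le> k" "k < N"
    and E1: "p ^ (z + k) * a - p ^ z * a = p ^ (z' + j) * q - p ^ z' * m"
    using codegrees[OF \<open>q \<in> S\<close>] by blast
  have "z = z'" and F0: "a * (p ^ N - 1) = p ^ N' * q - m"
    using cancel_common_prime_power[OF p coprime(1,3) _ _ vertices] k j by simp_all
  have F1: "a * (p ^ k - 1) = p ^ j * q - m"
    using cancel_common_prime_power[OF p coprime(1,3) k(1) j(1) E1] by simp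
  have "k = j" using equal_exponents[OF p coprime(1,2) F0 F1 k j] .
  have "m = q"
  proof (rule ccontr)
    assume "m \<noteq> q"
    then obtain c where "c \<in> S" "c < q" using noncentral by blast
    then obtain k' where "1 \<le> k'"
      and "p ^ (z + k') * a - p ^ z * a = p ^ (z' + j) * c - p ^ z' * m"
      using codegrees by blast
    then have "a * (p ^ k' - 1) = p ^ j * c - m"
      using cancel_common_prime_power[OF p coprime(1,3)] j(1) by blast
    moreover have "a * (p ^ j - 1) = p ^ j * q - m" using F1 \<open>k = j\<close> by simp
    ultimately show False
      using codegree_gap[OF p coprime(1) pos _ _ \<open>c < q\<close> \<open>1 \<le> k'\<close>] by blast
  qed
  have p1: "1 < p" using prime_gt_1_int[OF p] .
  have "p ^ j \<noteq> 1" using one_less_power[OF p1, of j] j(1) by simp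
  moreover have "(a - q) * (p ^ j - 1) = 0" using F1 \<open>k = j\<close> \<open>m = q\<close> by (simp add: algebra_simps)
  ultimately have "a = q" by simp
  moreover have "q \<noteq> 0" using coprime(2) by auto
  moreover have "q * (p ^ N - p ^ N') = 0" using F0 \<open>m = q\<close> \<open>a = q\<close> by (simp add: algebra_simps)
  ultimately have "p ^ N = p ^ N'" by simp
  then show ?thesis using \<open>z = z'\<close> \<open>a = q\<close> by (simp add: power_add)
qed

theorem mainTheorem6:
  fixes p :: nat
    and P :: "'a monoid" and A :: "'b monoid"
    and P1 :: "'c monoid" and Q :: "'d monoid"
  assumes "Factorial_Ring.prime p"
    and "p_group p P" and "\<not> comm_group P"
    and "comm_group A" and "finite (carrier A)" and "order A > 1" and "coprime p (order A)"
    and "p_group p P1" and "\<not> comm_group P1"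
    and "group Q" and "finite (carrier Q)" and "coprime p (order Q)"
    and "nilpotent_group (P1 \<times>\<times> Q)"
    and "nc_irregular (P \<times>\<times> A)" and "nc_irregular (P1 \<times>\<times> Q)"
    and "nc_graph_iso (P \<times>\<times> A) (P1 \<times>\<times> Q)"
  shows "order (P \<times>\<times> A) = order (P1 \<times>\<times> Q)"
proof -
  note iso = assms(16) and Q = assms(10,11)
  have P: "group P" "finite (carrier P)" and P1: "group P1" "finite (carrier P1)"
    using assms(2,8) by (auto simp: p_group_def)
  have A: "group A" "grp_center A = carrier A"
    using assms(4) comm_group_iff_center[of A] by (auto simp: comm_group_def)
  obtain z N where ZP: "card (grp_center P) = p ^ z" "order P = p ^ (z + N)"
    using p_group_center_card[OF assms(1,2)] .
  obtain z' N' where ZP1: "card (grp_center P1) = p ^ z'" "order P1 = p ^ (z' + N')"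
    using p_group_center_card[OF assms(1,8)] .
  obtain y1 where y1: "y1 \<in> carrier P1" "y1 \<notin> grp_center P1"
    using assms(9) comm_group_iff_center[OF P1(1)] by (auto simp: grp_center_def)
  obtain j where j: "1 \<le> j" "j < N'" "card (centralizer P1 y1) = p ^ (z' + j)"
    using p_group_centralizer_card[OF assms(1,8) ZP1 y1] .
  have vertices: "int p ^ (z + N) * int (order A) - int p ^ z * int (order A)
      = int p ^ (z' + N') * int (order Q) - int p ^ z' * int (card (grp_center Q))"
    using nc_graph_iso_card_vertices[OF iso] DirProd_card_nc_vertices[OF P(1) A(1) P(2) assms(5)]
      DirProd_card_nc_vertices[OF P1(1) Q(1) P1(2) Q(2)] ZP ZP1 A(2) by (simp add: order_def)
  define S where "S = (\<lambda>y. int (card (centralizer Q y))) ` carrier Q"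
  have codegrees: "\<exists>k. 1 \<le> k \<and> k < N \<and> int p ^ (z + k) * int (order A) - int p ^ z * int (order A)
      = int p ^ (z' + j) * c - int p ^ z' * int (card (grp_center Q))" if "c \<in> S" for c
    using that codegree_correspondence[OF iso assms(1,2,4,5) P1 Q ZP ZP1(1) y1 j(3)]
    unfolding S_def by blast
  have coprime: "\<not> int p dvd int (order A)" "\<not> int p dvd int (order Q)"
      "\<not> int p dvd int (card (grp_center Q))"
    using prime_not_dvd_coprime[OF assms(1)] assms(7,12) center_card_dvd_order[OF Q]
    by (auto dest: dvd_trans simp flip: int_dvd_int_iff)
  have "int p ^ (z + N) * int (order A) = int p ^ (z' + N') * int (order Q)"
    using orders_from_codegree_equations[OF _ coprime _ j(1,2) vertices codegrees]
      centralizer_orders[OF Q] assms(1,6) unfolding S_def by auto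
  then show ?thesis using ZP(2) ZP1(2) P(2) P1(2) assms(5) Q(2)
    by (simp add: order_def card_cartesian_product flip: of_nat_power of_nat_mult)
qed

end
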